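(* Let $\mathbb{F}$ be a field of characteristic zero, $n\ge1$, $a\in(\mathbb{F}^* )^n$ and $B\in\mathbb{F}^{n\times n}$ symmetric, and suppose that $G(a,B)$ is twin-free (no two rows of $B$ are equal). Let $k\in\mathbb{N}$ and let $p_{a,B}:\mathbb{F}\mathcal{G}_k\to V^{\otimes k}$ be the linear map defined below. Then (1) the kernel of $p_{a,B}$ on $\mathbb{F}\mathcal{G}_k$ equals the ideal $\mathcal I_k=\{\gamma\in\mathbb{F}\mathcal{G}_k : \hom(\gamma\cdot F,G(a,B))=0\text{ for all }F\in\mathcal{G}_k\}$; and (2) $p_{a,B}(\mathbb{F}\mathcal{G}_k)=(V^{\otimes k})^{\Gamma(a,B)}$, the space of tensors in $V^{\otimes k}$ invariant under the action of $\Gamma(a,B)$.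
   Context: Graphs are finite multigraphs, possibly with loops and multiple edges. $G(a,B)$ is the weighted graph on vertex set $[n]$ with vertex weights $a_i$ and edge weights $B_{i,j}$. For a graph $F$, $\hom(F,G(a,B))=\sum_{\phi:V(F)\to[n]}\prod_{v\in V(F)}a_{\phi(v)}\prod_{uv\in E(F)}B_{\phi(u),\phi(v)}$ (edges with multiplicity), extended linearly to formal linear combinations of graphs. A $k$-labelled graph is a graph in which $k$ distinct vertices are labelled $1,\dots,k$ (we identify these vertices with $[k]$); $\mathcal{G}_k$ is the set of $k$-labelled graphs. For $F_1,F_2\in\mathcal{G}_k$, the product $F_1\cdot F_2\in\mathcal{G}_k$ is obtained from the disjoint union by identifying vertices with the same label; $\mathbb{F}\mathcal{G}_k$ is the corresponding semigroup algebra of finite formal $\mathbb{F}$-linear combinations of $k$-labelled graphs. When applying $\hom$ to a labelled graph the labels are forgotten. Let $V=\mathbb{F}^n$ with standard basis $e_1,\dots,e_n$. The map $p_{a,B}$ is the linear map with $$p_{a,B}(F)=\sum_{\phi:V(F)\to[n]}\Big(\prod_{v\in V(F)\setminus[k]}a_{\phi(v)}\prod_{uv\in E(F)}B_{\phi(u),\phi(v)}\Big)e_{\phi(1)}\otimes\cdots\otimes e_{\phi(k)}$$ for $F\in\mathcal{G}_k$. $\Gamma(a,B)$ is the group of permutations $\gamma$ of $[n]$ with $a_{\gamma(i)}=a_i$ and $B_{\gamma(i),\gamma(j)}=B_{i,j}$ for all $i,j$; it acts on $V^{\otimes k}$ by $\gamma(e_{i_1}\otimes\cdots\otimes e_{i_k})=e_{\gamma(i_1)}\otimes\cdots\otimes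 e_{\gamma(i_k)}$. *)

theory Defs
  imports Main "HOL-Library.Multiset" "HOL-Combinatorics.Permutations"
begin

text \<open>Finite multigraphs (loops and multiple edges allowed): a graph is a pair (m, E)
 with vertex set {0..<m} and a multiset E of edges; an edge is a pair (u,v) with u,v < m
 (orientation is irrelevant for all quantities below since B is symmetric).
 A k-labelled graph is a graph with k <= m, whose labelled vertices 1..k are the vertices 0..<k.\<close>

type_synonym mgraph = "nat \<times> (nat \<times> nat) multiset"

definition is_graph :: "mgraph \<Rightarrow> bool" where
  "is_graph F \<longleftrightarrow> (\<forall>e \<in># snd F. fst e < fst F \<and> snd e < fst F)"

definition klgraphs :: "nat \<Rightarrow> mgraph set" where
  "klgraphs k = {F. is_graph F \<and> k \<le> fst F}"

text \<open>Product of k-labelled graphs: disjoint union, glueing the labelled vertices.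
 Vertex v of F2 becomes v if v < k and v + m1 - k otherwise.\<close>

definition glue_vertex :: "nat \<Rightarrow> nat \<Rightarrow> nat \<Rightarrow> nat" where
  "glue_vertex k m1 v = (if v < k then v else v + m1 - k)"

definition lprod :: "nat \<Rightarrow> mgraph \<Rightarrow> mgraph \<Rightarrow> mgraph" where
  "lprod k F1 F2 =
     (fst F1 + fst F2 - k,
      snd F1 + image_mset (\<lambda>(u,v). (glue_vertex k (fst F1) u, glue_vertex k (fst F1) v)) (snd F2))"

definition vmaps :: "nat \<Rightarrow> mgraph \<Rightarrow> (nat \<Rightarrow> nat) set" where
  "vmaps n F = PiE {0..<fst F} (\<lambda>_. {0..<n})"

definition edge_weight :: "(nat \<Rightarrow> nat \<Rightarrow> 'f::field) \<Rightarrow> mgraph \<Rightarrow> (nat \<Rightarrow> nat) \<Rightarrow> 'f" where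
  "edge_weight B F \<phi> = prod_mset (image_mset (\<lambda>(u,v). B (\<phi> u) (\<phi> v)) (snd F))"

definition hom :: "nat \<Rightarrow> (nat \<Rightarrow> 'f::field) \<Rightarrow> (nat \<Rightarrow> nat \<Rightarrow> 'f) \<Rightarrow> mgraph \<Rightarrow> 'f" where
  "hom n a B F = (\<Sum>\<phi> \<in> vmaps n F. (\<Prod>v<fst F. a (\<phi> v)) * edge_weight B F \<phi>)"

definition lincombs :: "nat \<Rightarrow> (mgraph \<Rightarrow> 'f::field) set" where
  "lincombs k = {\<gamma>. finite {F. \<gamma> F \<noteq> 0} \<and> (\<forall>F. \<gamma> F \<noteq> 0 \<longrightarrow> F \<in> klgraphs k)}"

definition supp :: "(mgraph \<Rightarrow> 'f::field) \<Rightarrow> mgraph set" where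
  "supp \<gamma> = {F. \<gamma> F \<noteq> 0}"

definition hom_prod :: "nat \<Rightarrow> (nat \<Rightarrow> 'f::field) \<Rightarrow> (nat \<Rightarrow> nat \<Rightarrow> 'f) \<Rightarrow> nat
    \<Rightarrow> (mgraph \<Rightarrow> 'f) \<Rightarrow> mgraph \<Rightarrow> 'f" where
  "hom_prod n a B k \<gamma> F = (\<Sum>F' \<in> supp \<gamma>. \<gamma> F' * hom n a B (lprod k F' F))"

definition ideal_I :: "nat \<Rightarrow> (nat \<Rightarrow> 'f::field) \<Rightarrow> (nat \<Rightarrow> nat \<Rightarrow> 'f) \<Rightarrow> nat \<Rightarrow> (mgraph \<Rightarrow> 'f) set" where
  "ideal_I n a B k = {\<gamma> \<in> lincombs k. \<forall>F \<in> klgraphs k. hom_prod n a B k \<gamma> F = 0}"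

text \<open>Tensors in V^{\<otimes>k}, V = F^n: coefficient functions on index lists
 [i_1,...,i_k] (entries < n), zero on all other lists. The list xs stands for
 e_{xs!0} \<otimes> ... \<otimes> e_{xs!(k-1)}.\<close>

definition idx_lists :: "nat \<Rightarrow> nat \<Rightarrow> nat list set" where
  "idx_lists n k = {xs. length xs = k \<and> set xs \<subseteq> {0..<n}}"

definition tensors :: "nat \<Rightarrow> nat \<Rightarrow> (nat list \<Rightarrow> 'f::field) set" where
  "tensors n k = {T. \<forall>xs. xs \<notin> idx_lists n k \<longrightarrow> T xs = 0}"

definition p_graph :: "nat \<Rightarrow> (nat \<Rightarrow> 'f::field) \<Rightarrow> (nat \<Rightarrow> nat \<Rightarrow> 'f) \<Rightarrow> nat
    \<Rightarrow> mgraph \<Rightarrow> nat list \<Rightarrow> 'f" where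
  "p_graph n a B k F xs =
     (if xs \<in> idx_lists n k then
        (\<Sum>\<phi> \<in> {\<phi> \<in> vmaps n F. \<forall>j<k. \<phi> j = xs ! j}.
            (\<Prod>v\<in>{k..<fst F}. a (\<phi> v)) * edge_weight B F \<phi>)
      else 0)"

definition p_lin :: "nat \<Rightarrow> (nat \<Rightarrow> 'f::field) \<Rightarrow> (nat \<Rightarrow> nat \<Rightarrow> 'f) \<Rightarrow> nat
    \<Rightarrow> (mgraph \<Rightarrow> 'f) \<Rightarrow> nat list \<Rightarrow> 'f" where
  "p_lin n a B k \<gamma> = (\<lambda>xs. \<Sum>F \<in> supp \<gamma>. \<gamma> F * p_graph n a B k F xs)"

definition Aut :: "nat \<Rightarrow> (nat \<Rightarrow> 'f::field) \<Rightarrow> (nat \<Rightarrow> nat \<Rightarrow> 'f) \<Rightarrow> (nat \<Rightarrow> nat) set" where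
  "Aut n a B = {g. g permutes {0..<n} \<and> (\<forall>i<n. a (g i) = a i)
                   \<and> (\<forall>i<n. \<forall>j<n. B (g i) (g j) = B i j)}"

text \<open>g(e_{i_1}\<otimes>...\<otimes>e_{i_k}) = e_{g i_1}\<otimes>...; so (g T)(map g xs) = T xs.\<close>

definition tensor_act :: "(nat \<Rightarrow> nat) \<Rightarrow> (nat list \<Rightarrow> 'f) \<Rightarrow> nat list \<Rightarrow> 'f" where
  "tensor_act g T = (\<lambda>ys. T (map (inv g) ys))"

definition invariant_tensors :: "nat \<Rightarrow> (nat \<Rightarrow> 'f::field) \<Rightarrow> (nat \<Rightarrow> nat \<Rightarrow> 'f) \<Rightarrow> nat
    \<Rightarrow> (nat list \<Rightarrow> 'f) set" where
  "invariant_tensors n a B k = {T \<in> tensors n k. \<forall>g \<in> Aut n a B. tensor_act g T = T}"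

definition twin_free :: "nat \<Rightarrow> (nat \<Rightarrow> nat \<Rightarrow> 'f) \<Rightarrow> bool" where
  "twin_free n B \<longleftrightarrow> (\<forall>i<n. \<forall>j<n. i \<noteq> j \<longrightarrow> (\<exists>l<n. B i l \<noteq> B j l))"

end

theory Submission
  imports Defs
begin

text \<open>Gluing labelled graphs corresponds to pointwise multiplication of tensors, so the image
  of \<open>p_lin\<close> is a unital algebra of functions on index tuples; by interpolation it consists
  of all tensors constant on the classes of tuples that no labelled graph separates.
  These classes are the \<open>\<Gamma>(a,B)\<close>-orbits. If \<open>ys @ ws\<close> is inseparable from \<open>xs @ [0..<n]\<close>, in
  which every vertex is labelled, single edges force \<open>i \<mapsto> ws ! i\<close> to preserve \<open>B\<close>,
  twin-freeness makes it a bijection, and unlabelling one further vertex shows that it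
  preserves \<open>a\<close>. If only \<open>xs\<close> and \<open>ys\<close> are inseparable, unlabelling the \<open>n\<close> extra vertices of
  the class indicator of \<open>xs @ [0..<n]\<close> gives a nonzero count (characteristic zero) times a
  nonzero weight on the side of \<open>xs\<close>, so some \<open>ys @ ws\<close> lies in that class.
  For (1), \<open>hom(\<gamma> \<cdot> F)\<close> is the \<open>a\<close>-weighted pairing of \<open>p(\<gamma>)\<close> with \<open>p(F)\<close>, and pairing with
  the indicator of a class isolates the value of \<open>p(\<gamma>)\<close> there.\<close>

lemma finite_idx_lists [simp]: "finite (idx_lists n k)"
proof -
  have "idx_lists n k = {xs. set xs \<subseteq> {0..<n} \<and> length xs = k}"
    by (auto simp: idx_lists_def)
  then show ?thesis
    using finite_lists_length_eq[of "{0..<n}" k] by simp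
qed

lemma idx_lists_0 [simp]: "idx_lists n 0 = {[]}"
  by (auto simp: idx_lists_def)

lemma idx_lists_nth: "xs \<in> idx_lists n k \<Longrightarrow> i < k \<Longrightarrow> xs ! i < n"
  unfolding idx_lists_def by (auto dest!: nth_mem)

lemma idx_lists_length: "xs \<in> idx_lists n k \<Longrightarrow> length xs = k"
  by (simp add: idx_lists_def)

lemma idx_lists_append:
  "xs \<in> idx_lists n k \<Longrightarrow> ys \<in> idx_lists n r \<Longrightarrow> xs @ ys \<in> idx_lists n (k + r)"
  by (auto simp: idx_lists_def)

lemma upt_in_idx_lists: "[0..<n] \<in> idx_lists n n"
  by (auto simp: idx_lists_def)

lemma sum_idx_lists_Suc:
  "(\<Sum>ws\<in>idx_lists n (Suc r). f ws) = (\<Sum>ws\<in>idx_lists n r. \<Sum>w<n. f (ws @ [w]))"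
proof -
  have image: "idx_lists n (Suc r) = (\<lambda>(ws, w). ws @ [w]) ` (idx_lists n r \<times> {..<n})"
  proof safe
    fix xs assume xs: "xs \<in> idx_lists n (Suc r)"
    then have "xs \<noteq> []" by (auto simp: idx_lists_def)
    then have "xs = butlast xs @ [last xs]" by simp
    moreover have "butlast xs \<in> idx_lists n r" "last xs < n"
      using xs \<open>xs \<noteq> []\<close> by (auto simp: idx_lists_def dest: in_set_butlastD intro!: last_in_set)
    ultimately show "xs \<in> (\<lambda>(ws, w). ws @ [w]) ` (idx_lists n r \<times> {..<n})" by force
  qed (auto simp: idx_lists_def)
  have "inj_on (\<lambda>(ws, w). ws @ [w]) (idx_lists n r \<times> {..<n})"
    by (auto simp: inj_on_def)
  then show ?thesis
    unfolding image by (simp add: sum.reindex sum.cartesian_product case_prod_unfold)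
qed

lemma sum_idx_lists_1: "(\<Sum>ws\<in>idx_lists n (Suc 0). f ws) = (\<Sum>w<n. f [w])"
  using sum_idx_lists_Suc[where r=0 and f=f] by simp

lemma prod_list_map_nonzero:
  "\<forall>i<n. a i \<noteq> (0::'f::field) \<Longrightarrow> xs \<in> idx_lists n k \<Longrightarrow> prod_list (map a xs) \<noteq> 0"
  by (auto simp: prod_list_zero_iff idx_lists_def)

lemma finite_vmaps [simp]: "finite (vmaps n F)"
  unfolding vmaps_def by (simp add: finite_PiE)

lemma prod_glue_vertices:
  assumes "k \<le> m1" "k \<le> m2"
    and "\<forall>v<m1. \<phi> v = \<phi>1 v" and "\<forall>u<m2. \<phi> (glue_vertex k m1 u) = \<phi>2 u"
  shows "(\<Prod>v\<in>{k..<m1 + m2 - k}. f (\<phi> v)) =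
    (\<Prod>v\<in>{k..<m1}. (f (\<phi>1 v) :: 'a::comm_monoid_mult)) * (\<Prod>v\<in>{k..<m2}. f (\<phi>2 v))"
proof -
  have "(\<Prod>v\<in>{m1..<m1 + m2 - k}. f (\<phi> v)) = (\<Prod>v\<in>{k..<m2}. f (\<phi> (v + (m1 - k))))"
    using assms(1,2) prod.shift_bounds_nat_ivl[of "\<lambda>v. f (\<phi> v)" k "m1 - k" m2]
    by (simp add: add.commute)
  also have "\<dots> = (\<Prod>v\<in>{k..<m2}. f (\<phi>2 v))"
    using assms by (intro prod.cong) (auto simp: glue_vertex_def)
  finally show ?thesis
    using assms prod.atLeastLessThan_concat[of k m1 "m1 + m2 - k" "\<lambda>v. f (\<phi> v)"] by simp
qed

lemma lprod_in_klgraphs: "F1 \<in> klgraphs k \<Longrightarrow> F2 \<in> klgraphs k \<Longrightarrow> lprod k F1 F2 \<in> klgraphs k"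
  unfolding klgraphs_def is_graph_def lprod_def glue_vertex_def
  by (fastforce split: if_splits)

definition tensor_pairing :: "nat \<Rightarrow> (nat \<Rightarrow> 'f::field) \<Rightarrow> nat
    \<Rightarrow> (nat list \<Rightarrow> 'f) \<Rightarrow> (nat list \<Rightarrow> 'f) \<Rightarrow> 'f" where
  "tensor_pairing n a k S T = (\<Sum>xs\<in>idx_lists n k. prod_list (map a xs) * S xs * T xs)"

inductive_set p_span :: "nat \<Rightarrow> (nat \<Rightarrow> 'f::field) \<Rightarrow> (nat \<Rightarrow> nat \<Rightarrow> 'f) \<Rightarrow> nat
    \<Rightarrow> (nat list \<Rightarrow> 'f) set"
  for n a B k
where
  p_graph: "F \<in> klgraphs k \<Longrightarrow> p_graph n a B k F \<in> p_span n a B k"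
| zero: "(\<lambda>_. 0) \<in> p_span n a B k"
| add: "S \<in> p_span n a B k \<Longrightarrow> T \<in> p_span n a B k \<Longrightarrow> (\<lambda>xs. S xs + T xs) \<in> p_span n a B k"
| smult: "S \<in> p_span n a B k \<Longrightarrow> (\<lambda>xs. c * S xs) \<in> p_span n a B k"

definition unit_tensor :: "nat \<Rightarrow> nat \<Rightarrow> nat list \<Rightarrow> 'f::field" where
  "unit_tensor n k = (\<lambda>xs. if xs \<in> idx_lists n k then 1 else 0)"

definition p_equiv :: "nat \<Rightarrow> (nat \<Rightarrow> 'f::field) \<Rightarrow> (nat \<Rightarrow> nat \<Rightarrow> 'f) \<Rightarrow> nat
    \<Rightarrow> nat list \<Rightarrow> nat list \<Rightarrow> bool" where
  "p_equiv n a B k xs ys \<longleftrightarrow> (\<forall>F\<in>klgraphs k. p_graph n a B k F xs = p_graph n a B k F ys)"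

definition p_class :: "nat \<Rightarrow> (nat \<Rightarrow> 'f::field) \<Rightarrow> (nat \<Rightarrow> nat \<Rightarrow> 'f) \<Rightarrow> nat
    \<Rightarrow> nat list \<Rightarrow> nat list set" where
  "p_class n a B k xs = {ys \<in> idx_lists n k. p_equiv n a B k ys xs}"

definition class_indicator :: "nat \<Rightarrow> (nat \<Rightarrow> 'f::field) \<Rightarrow> (nat \<Rightarrow> nat \<Rightarrow> 'f) \<Rightarrow> nat
    \<Rightarrow> nat list \<Rightarrow> nat list \<Rightarrow> 'f" where
  "class_indicator n a B k xs = (\<lambda>ys. if ys \<in> p_class n a B k xs then 1 else 0)"

context
  fixes n :: nat and a :: "nat \<Rightarrow> 'f::field" and B :: "nat \<Rightarrow> nat \<Rightarrow> 'f"
begin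

lemma p_graph_outside: "xs \<notin> idx_lists n k \<Longrightarrow> p_graph n a B k F xs = 0"
  by (simp add: p_graph_def)

lemma p_graph_all_labelled:
  assumes "is_graph F" "fst F = k" "xs \<in> idx_lists n k"
  shows "p_graph n a B k F xs = edge_weight B F (\<lambda>i. xs ! i)"
proof -
  let ?\<phi> = "restrict (\<lambda>i. xs ! i) {0..<k}"
  have unique: "{\<phi> \<in> vmaps n F. \<forall>j<k. \<phi> j = xs ! j} = {?\<phi>}"
  proof safe
    fix \<phi> assume "\<phi> \<in> vmaps n F" "\<forall>j<k. \<phi> j = xs ! j"
    then show "\<phi> = ?\<phi>"
      using assms(2) unfolding vmaps_def by (auto simp: PiE_def extensional_def fun_eq_iff)
  next
    show "?\<phi> \<in> vmaps n F"
      using assms idx_lists_nth[OF assms(3)] unfolding vmaps_def by auto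
  qed auto
  have "edge_weight B F ?\<phi> = edge_weight B F (\<lambda>i. xs ! i)"
    unfolding edge_weight_def using assms(1,2)
    by (intro arg_cong[where f=prod_mset] image_mset_cong) (auto simp: is_graph_def)
  then show ?thesis
    using assms unique by (simp add: p_graph_def)
qed

lemma p_graph_single_edge:
  assumes "u < k" "v < k" "xs \<in> idx_lists n k"
  shows "p_graph n a B k (k, {#(u, v)#}) xs = B (xs ! u) (xs ! v)"
  using p_graph_all_labelled[of "(k, {#(u, v)#})" k xs] assms
  by (simp add: is_graph_def edge_weight_def)

lemma hom_eq_p_graph_unlabelled: "hom n a B F = p_graph n a B 0 F []"
proof -
  have "{0..<fst F} = {..<fst F}" by auto
  then show ?thesis by (simp add: p_graph_def hom_def idx_lists_def)
qed

lemma p_graph_unlabel_last: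
  assumes "Suc m \<le> fst F" "length xs = m"
  shows "p_graph n a B m F xs = (\<Sum>w<n. a w * p_graph n a B (Suc m) F (xs @ [w]))"
proof (cases "xs \<in> idx_lists n m")
  case False
  then have "\<And>w. xs @ [w] \<notin> idx_lists n (Suc m)" by (auto simp: idx_lists_def)
  then show ?thesis using False by (simp add: p_graph_def)
next
  case True
  define S where "S = {\<phi> \<in> vmaps n F. \<forall>j<m. \<phi> j = xs ! j}"
  define h where "h = (\<lambda>\<phi>. (\<Prod>v\<in>{m..<fst F}. a (\<phi> v)) * edge_weight B F \<phi>)"
  define h' where "h' = (\<lambda>\<phi>. (\<Prod>v\<in>{Suc m..<fst F}. a (\<phi> v)) * edge_weight B F \<phi>)"
  define S' where "S' = (\<lambda>w. {\<phi> \<in> vmaps n F. \<forall>j<Suc m. \<phi> j = (xs @ [w]) ! j})"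
  have "(\<lambda>\<phi>. \<phi> m) ` S \<subseteq> {..<n}"
    using assms(1) unfolding S_def vmaps_def by (auto simp: PiE_def Pi_def)
  then have "sum h S = (\<Sum>w<n. sum h {\<phi> \<in> S. \<phi> m = w})"
    using sum.group[of S "{..<n}" "\<lambda>\<phi>. \<phi> m" h] by (simp add: S_def)
  also have "\<dots> = (\<Sum>w<n. a w * p_graph n a B (Suc m) F (xs @ [w]))"
  proof (rule sum.cong[OF refl])
    fix w assume w: "w \<in> {..<n}"
    have "{\<phi> \<in> S. \<phi> m = w} = S' w"
      unfolding S_def S'_def using assms(2) by (auto simp: nth_append less_Suc_eq)
    moreover have "h \<phi> = a w * h' \<phi>" if "\<phi> \<in> S' w" for \<phi>
    proof -
      have "\<phi> m = w" using that assms(2) by (auto simp: S'_def nth_append)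
      then show ?thesis
        using assms(1) by (simp add: h_def h'_def prod.atLeast_Suc_lessThan mult.assoc)
    qed
    moreover have "xs @ [w] \<in> idx_lists n (Suc m)" using True w by (auto simp: idx_lists_def)
    ultimately show "sum h {\<phi> \<in> S. \<phi> m = w} = a w * p_graph n a B (Suc m) F (xs @ [w])"
      by (simp add: p_graph_def sum_distrib_left S'_def h'_def)
  qed
  finally show ?thesis using True by (simp add: p_graph_def S_def h_def)
qed

lemma p_graph_unlabel:
  assumes "m + r \<le> fst F" "length xs = m"
  shows "p_graph n a B m F xs =
    (\<Sum>ws\<in>idx_lists n r. prod_list (map a ws) * p_graph n a B (m + r) F (xs @ ws))"
  using assms(1)
proof (induction r)
  case 0
  then show ?case by simp
next
  case (Suc r)
  have "p_graph n a B (m + r) F (xs @ ws) =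
      (\<Sum>w<n. a w * p_graph n a B (m + Suc r) F (xs @ ws @ [w]))" if "ws \<in> idx_lists n r" for ws
    using p_graph_unlabel_last[of "m + r" F "xs @ ws"] Suc.prems that assms(2)
    by (simp add: idx_lists_def)
  then have "p_graph n a B m F xs = (\<Sum>ws\<in>idx_lists n r. \<Sum>w<n.
      prod_list (map a (ws @ [w])) * p_graph n a B (m + Suc r) F (xs @ ws @ [w]))"
    using Suc by (simp add: sum_distrib_left mult_ac)
  then show ?case by (simp add: sum_idx_lists_Suc)
qed

lemma edge_weight_lprod:
  assumes "is_graph F1" "is_graph F2"
    and "\<forall>v<fst F1. \<phi> v = \<phi>1 v" and "\<forall>u<fst F2. \<phi> (glue_vertex k (fst F1) u) = \<phi>2 u"
  shows "edge_weight B (lprod k F1 F2) \<phi> = edge_weight B F1 \<phi>1 * edge_weight B F2 \<phi>2"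
proof -
  have "image_mset (\<lambda>(u, v). B (\<phi> u) (\<phi> v)) (snd F1) = image_mset (\<lambda>(u, v). B (\<phi>1 u) (\<phi>1 v)) (snd F1)"
    using assms(1,3) by (intro image_mset_cong) (auto simp: is_graph_def)
  moreover have "image_mset ((\<lambda>(u, v). B (\<phi> u) (\<phi> v)) \<circ>
        (\<lambda>(u, v). (glue_vertex k (fst F1) u, glue_vertex k (fst F1) v))) (snd F2) =
      image_mset (\<lambda>(u, v). B (\<phi>2 u) (\<phi>2 v)) (snd F2)"
    using assms(2,4) by (intro image_mset_cong) (auto simp: is_graph_def)
  ultimately show ?thesis
    by (simp add: edge_weight_def lprod_def image_mset.compositionality)
qed

lemma p_graph_lprod:
  assumes F1: "F1 \<in> klgraphs k" and F2: "F2 \<in> klgraphs k" and xs: "xs \<in> idx_lists n k"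
  shows "p_graph n a B k (lprod k F1 F2) xs = p_graph n a B k F1 xs * p_graph n a B k F2 xs"
proof -
  define m1 where "m1 = fst F1"
  define m2 where "m2 = fst F2"
  define M where "M = m1 + m2 - k"
  have km1: "k \<le> m1" and km2: "k \<le> m2"
    using F1 F2 by (auto simp: klgraphs_def m1_def m2_def)
  have edges1: "\<forall>e\<in>#snd F1. fst e < m1 \<and> snd e < m1"
    using F1 by (auto simp: klgraphs_def is_graph_def m1_def)
  have edges2: "\<forall>e\<in>#snd F2. fst e < m2 \<and> snd e < m2"
    using F2 by (auto simp: klgraphs_def is_graph_def m2_def)
  define G where "G = lprod k F1 F2"
  have fst_G: "fst G = M" by (simp add: G_def lprod_def M_def m1_def m2_def)
  define S where "S = {\<phi> \<in> vmaps n G. \<forall>j<k. \<phi> j = xs ! j}"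
  define S1 where "S1 = {\<phi> \<in> vmaps n F1. \<forall>j<k. \<phi> j = xs ! j}"
  define S2 where "S2 = {\<phi> \<in> vmaps n F2. \<forall>j<k. \<phi> j = xs ! j}"
  define h where "h = (\<lambda>\<phi>. (\<Prod>v\<in>{k..<M}. a (\<phi> v)) * edge_weight B G \<phi>)"
  define h1 where "h1 = (\<lambda>\<phi>. (\<Prod>v\<in>{k..<m1}. a (\<phi> v)) * edge_weight B F1 \<phi>)"
  define h2 where "h2 = (\<lambda>\<phi>. (\<Prod>v\<in>{k..<m2}. a (\<phi> v)) * edge_weight B F2 \<phi>)"
  define join :: "(nat \<Rightarrow> nat) \<times> (nat \<Rightarrow> nat) \<Rightarrow> nat \<Rightarrow> nat" where
    "join = (\<lambda>(\<phi>1, \<phi>2) v. if v < m1 then \<phi>1 v else if v < M then \<phi>2 (v + k - m1) else undefined)"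
  define split :: "(nat \<Rightarrow> nat) \<Rightarrow> (nat \<Rightarrow> nat) \<times> (nat \<Rightarrow> nat)" where
    "split = (\<lambda>\<psi>. (restrict \<psi> {0..<m1},
       \<lambda>v. if v < k then \<psi> v else if v < m2 then \<psi> (v + m1 - k) else undefined))"
  have "(\<Sum>p\<in>S1 \<times> S2. h1 (fst p) * h2 (snd p)) = sum h S"
  proof (rule sum.reindex_bij_witness[where i=split and j=join])
    fix \<psi> assume "\<psi> \<in> S"
    then have \<psi>: "\<psi> \<in> vmaps n G" "\<forall>j<k. \<psi> j = xs ! j" by (auto simp: S_def)
    then have "\<And>v. M \<le> v \<Longrightarrow> \<psi> v = undefined" and "\<And>v. v < M \<Longrightarrow> \<psi> v < n"
      by (auto simp: vmaps_def fst_G PiE_def extensional_def Pi_def)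
    then show "join (split \<psi>) = \<psi>" and "split \<psi> \<in> S1 \<times> S2"
      using km1 km2 \<psi>(2) idx_lists_nth[OF xs]
      by (auto simp: join_def split_def fun_eq_iff M_def S1_def S2_def vmaps_def m1_def m2_def
          PiE_def extensional_def Pi_def)
  next
    fix p assume "p \<in> S1 \<times> S2"
    then obtain \<phi>1 \<phi>2 where p: "p = (\<phi>1, \<phi>2)" "\<phi>1 \<in> S1" "\<phi>2 \<in> S2" by auto
    then have e1: "\<And>v. m1 \<le> v \<Longrightarrow> \<phi>1 v = undefined" and r1: "\<And>v. v < m1 \<Longrightarrow> \<phi>1 v < n"
      and e2: "\<And>v. m2 \<le> v \<Longrightarrow> \<phi>2 v = undefined" and r2: "\<And>v. v < m2 \<Longrightarrow> \<phi>2 v < n"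
      and l1: "\<forall>j<k. \<phi>1 j = xs ! j" and l2: "\<forall>j<k. \<phi>2 j = xs ! j"
      by (auto simp: S1_def S2_def vmaps_def m1_def m2_def PiE_def extensional_def Pi_def)
    show "split (join p) = p"
      using km1 km2 e1 e2 l1 l2 unfolding p by (auto simp: join_def split_def fun_eq_iff M_def)
    show "join p \<in> S"
      using km1 km2 r1 r2 l1 unfolding p
      by (auto simp: join_def S_def vmaps_def fst_G M_def PiE_def extensional_def Pi_def)
    have join: "\<And>v. join p v =
        (if v < m1 then \<phi>1 v else if v < M then \<phi>2 (v + k - m1) else undefined)"
      unfolding p join_def by simp
    have glue1: "\<forall>v<m1. join p v = \<phi>1 v" and glue2: "\<forall>u<m2. join p (glue_vertex k m1 u) = \<phi>2 u"
      using km1 km2 l1 l2 by (auto simp: join glue_vertex_def M_def)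
    then have vertices: "(\<Prod>v\<in>{k..<M}. a (join p v)) =
        (\<Prod>v\<in>{k..<m1}. a (\<phi>1 v)) * (\<Prod>v\<in>{k..<m2}. a (\<phi>2 v))"
      unfolding M_def by (rule prod_glue_vertices[OF km1 km2])
    from glue1 glue2 have "edge_weight B G (join p) = edge_weight B F1 \<phi>1 * edge_weight B F2 \<phi>2"
      using edge_weight_lprod[of F1 F2 "join p" \<phi>1 k \<phi>2] F1 F2
      by (simp add: G_def join klgraphs_def m1_def m2_def)
    then show "h (join p) = h1 (fst p) * h2 (snd p)"
      using vertices unfolding h_def h1_def h2_def p by (simp add: mult_ac)
  qed
  then show ?thesis
    using xs by (simp add: p_graph_def S_def S1_def S2_def h_def h1_def h2_def m1_def m2_def
        fst_G[unfolded G_def] G_def sum_product sum.cartesian_product case_prod_unfold)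
qed

lemma hom_lprod:
  assumes "F1 \<in> klgraphs k" "F2 \<in> klgraphs k"
  shows "hom n a B (lprod k F1 F2) = tensor_pairing n a k (p_graph n a B k F1) (p_graph n a B k F2)"
proof -
  have "k \<le> fst (lprod k F1 F2)"
    using lprod_in_klgraphs[OF assms] by (simp add: klgraphs_def)
  then show ?thesis
    using p_graph_unlabel[of 0 k "lprod k F1 F2" "[]"] p_graph_lprod[OF assms]
    by (simp add: hom_eq_p_graph_unlabelled tensor_pairing_def mult.assoc)
qed

lemma Aut_less: "g \<in> Aut n a B \<Longrightarrow> i < n \<Longrightarrow> g i < n"
  unfolding Aut_def using permutes_in_image[of g "{0..<n}" i] by auto

lemma Aut_inv_less: "g \<in> Aut n a B \<Longrightarrow> i < n \<Longrightarrow> inv g i < n"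
  unfolding Aut_def using permutes_in_image[of "inv g" "{0..<n}" i] permutes_inv[of g "{0..<n}"]
  by auto

lemma Aut_inv_apply: "g \<in> Aut n a B \<Longrightarrow> inv g (g i) = i"
  unfolding Aut_def using permutes_inverses(2) by fastforce

lemma Aut_apply_inv: "g \<in> Aut n a B \<Longrightarrow> g (inv g i) = i"
  unfolding Aut_def using permutes_inverses(1) by fastforce

lemma map_Aut_in_idx_lists: "g \<in> Aut n a B \<Longrightarrow> xs \<in> idx_lists n k \<Longrightarrow> map g xs \<in> idx_lists n k"
  using Aut_less by (fastforce simp: idx_lists_def)

lemma prod_list_map_Aut:
  assumes "g \<in> Aut n a B" "xs \<in> idx_lists n k"
  shows "prod_list (map a (map g xs)) = prod_list (map a xs)"
proof -
  have "map (a \<circ> g) xs = map a xs"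
    using assms by (intro map_cong) (auto simp: Aut_def idx_lists_def)
  then show ?thesis by (simp only: map_map)
qed

lemma p_graph_map_Aut:
  assumes g: "g \<in> Aut n a B" and F: "F \<in> klgraphs k" and xs: "xs \<in> idx_lists n k"
  shows "p_graph n a B k F (map g xs) = p_graph n a B k F xs"
proof -
  define m where "m = fst F"
  have km: "k \<le> m" and edges: "\<forall>e\<in>#snd F. fst e < m \<and> snd e < m"
    using F by (auto simp: klgraphs_def is_graph_def m_def)
  have g_a: "\<And>i. i < n \<Longrightarrow> a (g i) = a i"
    and g_B: "\<And>i j. i < n \<Longrightarrow> j < n \<Longrightarrow> B (g i) (g j) = B i j"
    using g by (auto simp: Aut_def)
  define S where "S = {\<phi> \<in> vmaps n F. \<forall>j<k. \<phi> j = xs ! j}"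
  define S' where "S' = {\<phi> \<in> vmaps n F. \<forall>j<k. \<phi> j = map g xs ! j}"
  define h where "h = (\<lambda>\<phi>. (\<Prod>v\<in>{k..<m}. a (\<phi> v)) * edge_weight B F \<phi>)"
  have len: "length xs = k" using xs by (simp add: idx_lists_def)
  have "sum h S = sum h S'"
  proof (rule sum.reindex_bij_witness[where i="\<lambda>\<psi>. restrict (inv g \<circ> \<psi>) {0..<m}"
        and j="\<lambda>\<phi>. restrict (g \<circ> \<phi>) {0..<m}"])
    fix \<phi> assume "\<phi> \<in> S"
    then have e: "\<And>v. m \<le> v \<Longrightarrow> \<phi> v = undefined" and r: "\<And>v. v < m \<Longrightarrow> \<phi> v < n"
      and l: "\<forall>j<k. \<phi> j = xs ! j"
      by (auto simp: S_def vmaps_def m_def PiE_def extensional_def Pi_def)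
    show "restrict (inv g \<circ> restrict (g \<circ> \<phi>) {0..<m}) {0..<m} = \<phi>"
      using e Aut_inv_apply[OF g] by (auto simp: fun_eq_iff)
    show "restrict (g \<circ> \<phi>) {0..<m} \<in> S'"
      using r l km len Aut_less[OF g] by (auto simp: S'_def vmaps_def m_def)
    have "(\<Prod>v\<in>{k..<m}. a (restrict (g \<circ> \<phi>) {0..<m} v)) = (\<Prod>v\<in>{k..<m}. a (\<phi> v))"
      using r g_a by (intro prod.cong) auto
    moreover have "edge_weight B F (restrict (g \<circ> \<phi>) {0..<m}) = edge_weight B F \<phi>"
      unfolding edge_weight_def using edges r g_B
      by (intro arg_cong[where f=prod_mset] image_mset_cong) auto
    ultimately show "h (restrict (g \<circ> \<phi>) {0..<m}) = h \<phi>" by (simp add: h_def)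
  next
    fix \<psi> assume "\<psi> \<in> S'"
    then have e: "\<And>v. m \<le> v \<Longrightarrow> \<psi> v = undefined" and r: "\<And>v. v < m \<Longrightarrow> \<psi> v < n"
      and l: "\<forall>j<k. \<psi> j = map g xs ! j"
      by (auto simp: S'_def vmaps_def m_def PiE_def extensional_def Pi_def)
    show "restrict (g \<circ> restrict (inv g \<circ> \<psi>) {0..<m}) {0..<m} = \<psi>"
      using e Aut_apply_inv[OF g] by (auto simp: fun_eq_iff)
    show "restrict (inv g \<circ> \<psi>) {0..<m} \<in> S"
      using r l km len Aut_inv_less[OF g] Aut_inv_apply[OF g] by (auto simp: S_def vmaps_def m_def)
  qed
  then show ?thesis
    using xs map_Aut_in_idx_lists[OF g xs] by (simp add: p_graph_def S_def S'_def h_def m_def)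
qed

lemma p_span_outside: "S \<in> p_span n a B k \<Longrightarrow> xs \<notin> idx_lists n k \<Longrightarrow> S xs = 0"
  by (induction rule: p_span.induct) (auto simp: p_graph_outside)

lemma p_span_sum:
  "finite I \<Longrightarrow> (\<And>i. i \<in> I \<Longrightarrow> S i \<in> p_span n a B k) \<Longrightarrow>
    (\<lambda>xs. \<Sum>i\<in>I. S i xs) \<in> p_span n a B k"
proof (induction rule: finite_induct)
  case (insert i I)
  then show ?case using p_span.add[of "S i" n a B k "\<lambda>xs. \<Sum>i\<in>I. S i xs"] by simp
qed (simp add: p_span.zero)

lemma p_graph_mult_p_span:
  assumes "F \<in> klgraphs k" "T \<in> p_span n a B k"
  shows "(\<lambda>xs. p_graph n a B k F xs * T xs) \<in> p_span n a B k"
  using assms(2)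
proof (induction rule: p_span.induct)
  case (p_graph F')
  have "p_graph n a B k F xs * p_graph n a B k F' xs = p_graph n a B k (lprod k F F') xs" for xs
    by (cases "xs \<in> idx_lists n k") (simp_all add: p_graph_lprod[OF assms(1) p_graph] p_graph_outside)
  then have "(\<lambda>xs. p_graph n a B k F xs * p_graph n a B k F' xs) = p_graph n a B k (lprod k F F')"
    by (simp add: fun_eq_iff)
  then show ?case
    using p_span.p_graph[OF lprod_in_klgraphs[OF assms(1) p_graph]] by simp
next
  case (add S T)
  then show ?case using p_span.add[OF add.IH] by (simp add: distrib_left)
next
  case (smult S c)
  then show ?case using p_span.smult[OF smult.IH, of c] by (simp add: mult_ac)
qed (simp add: p_span.zero)

lemma p_span_mult:
  assumes "S \<in> p_span n a B k" "T \<in> p_span n a B k"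
  shows "(\<lambda>xs. S xs * T xs) \<in> p_span n a B k"
  using assms(1)
proof (induction rule: p_span.induct)
  case (p_graph F)
  then show ?case using p_graph_mult_p_span[OF p_graph assms(2)] by simp
next
  case (add S S')
  then show ?case using p_span.add[OF add.IH] by (simp add: distrib_right)
next
  case (smult S c)
  then show ?case using p_span.smult[OF smult.IH, of c] by (simp add: mult_ac)
qed (simp add: p_span.zero)

lemma unit_tensor_in_p_span: "unit_tensor n k \<in> p_span n a B k"
proof -
  have "p_graph n a B k (k, {#}) = unit_tensor n k"
    using p_graph_all_labelled[of "(k, {#})" k]
    by (auto simp: fun_eq_iff unit_tensor_def p_graph_outside is_graph_def edge_weight_def)
  moreover have "(k, {#}) \<in> klgraphs k"
    by (simp add: klgraphs_def is_graph_def)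
  ultimately show ?thesis by (metis p_span.p_graph)
qed

lemma p_span_prod:
  "finite I \<Longrightarrow> (\<And>i. i \<in> I \<Longrightarrow> S i \<in> p_span n a B k) \<Longrightarrow>
    (\<lambda>xs. (\<Prod>i\<in>I. S i xs) * unit_tensor n k xs) \<in> p_span n a B k"
proof (induction rule: finite_induct)
  case empty
  then show ?case using unit_tensor_in_p_span by simp
next
  case (insert i I)
  then show ?case
    using p_span_mult[where S="S i" and T="\<lambda>xs. (\<Prod>i\<in>I. S i xs) * unit_tensor n k xs"]
    by (simp add: mult_ac)
qed

lemma p_lin_eq_sum:
  "finite U \<Longrightarrow> supp \<gamma> \<subseteq> U \<Longrightarrow> p_lin n a B k \<gamma> xs = (\<Sum>F\<in>U. \<gamma> F * p_graph n a B k F xs)"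
  unfolding p_lin_def by (intro sum.mono_neutral_left) (auto simp: supp_def)

lemma lincombs_finite_supp: "\<gamma> \<in> lincombs k \<Longrightarrow> finite (supp \<gamma>)"
  by (simp add: lincombs_def supp_def)

lemma lincombs_add:
  assumes "\<gamma>1 \<in> lincombs k" "\<gamma>2 \<in> lincombs k"
  shows "(\<lambda>F. \<gamma>1 F + \<gamma>2 F) \<in> lincombs k"
    and "p_lin n a B k (\<lambda>F. \<gamma>1 F + \<gamma>2 F) = (\<lambda>xs. p_lin n a B k \<gamma>1 xs + p_lin n a B k \<gamma>2 xs)"
proof -
  define U where "U = supp \<gamma>1 \<union> supp \<gamma>2"
  have U: "finite U" "supp \<gamma>1 \<subseteq> U" "supp \<gamma>2 \<subseteq> U" "supp (\<lambda>F. \<gamma>1 F + \<gamma>2 F) \<subseteq> U"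
    using assms[THEN lincombs_finite_supp] by (auto simp: U_def supp_def)
  have "F \<in> klgraphs k" if "\<gamma>1 F + \<gamma>2 F \<noteq> 0" for F
  proof -
    have "\<gamma>1 F \<noteq> 0 \<or> \<gamma>2 F \<noteq> 0" using that by auto
    then show ?thesis using assms unfolding lincombs_def by blast
  qed
  moreover have "finite {F. \<gamma>1 F + \<gamma>2 F \<noteq> 0}"
    using finite_subset[OF U(4,1)] by (simp only: supp_def)
  ultimately show "(\<lambda>F. \<gamma>1 F + \<gamma>2 F) \<in> lincombs k"
    unfolding lincombs_def by blast
  show "p_lin n a B k (\<lambda>F. \<gamma>1 F + \<gamma>2 F) = (\<lambda>xs. p_lin n a B k \<gamma>1 xs + p_lin n a B k \<gamma>2 xs)"
    unfolding p_lin_eq_sum[OF U(1,4)] p_lin_eq_sum[OF U(1,2)] p_lin_eq_sum[OF U(1,3)]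
    by (simp add: sum.distrib[symmetric] distrib_right)
qed

lemma lincombs_smult:
  assumes "\<gamma> \<in> lincombs k"
  shows "(\<lambda>F. c * \<gamma> F) \<in> lincombs k"
    and "p_lin n a B k (\<lambda>F. c * \<gamma> F) = (\<lambda>xs. c * p_lin n a B k \<gamma> xs)"
proof -
  have U: "finite (supp \<gamma>)" "supp (\<lambda>F. c * \<gamma> F) \<subseteq> supp \<gamma>"
    using lincombs_finite_supp[OF assms] by (auto simp: supp_def)
  show "(\<lambda>F. c * \<gamma> F) \<in> lincombs k"
    using assms finite_subset[OF U(2,1)] unfolding lincombs_def supp_def by simp
  show "p_lin n a B k (\<lambda>F. c * \<gamma> F) = (\<lambda>xs. c * p_lin n a B k \<gamma> xs)"
    unfolding p_lin_eq_sum[OF U] p_lin_eq_sum[OF U(1) subset_refl]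
    by (simp add: sum_distrib_left mult_ac)
qed

lemma p_lin_image_eq_p_span: "p_lin n a B k ` lincombs k = p_span n a B k"
proof
  show "p_lin n a B k ` lincombs k \<subseteq> p_span n a B k"
  proof
    fix S assume "S \<in> p_lin n a B k ` lincombs k"
    then obtain \<gamma> where \<gamma>: "\<gamma> \<in> lincombs k" "S = p_lin n a B k \<gamma>" by auto
    have "F \<in> klgraphs k" if "F \<in> supp \<gamma>" for F
      using that \<gamma>(1) unfolding lincombs_def supp_def by blast
    then have "(\<lambda>xs. \<gamma> F * p_graph n a B k F xs) \<in> p_span n a B k" if "F \<in> supp \<gamma>" for F
      using that by (intro p_span.smult p_span.p_graph)
    then show "S \<in> p_span n a B k"
      unfolding \<gamma>(2) p_lin_def by (rule p_span_sum[OF lincombs_finite_supp[OF \<gamma>(1)]])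
  qed
next
  show "p_span n a B k \<subseteq> p_lin n a B k ` lincombs k"
  proof
    fix S assume "S \<in> p_span n a B k"
    then show "S \<in> p_lin n a B k ` lincombs k"
    proof (induction rule: p_span.induct)
      case (p_graph F)
      define \<gamma> :: "mgraph \<Rightarrow> 'f" where "\<gamma> = (\<lambda>G. if G = F then 1 else 0)"
      have "\<gamma> \<in> lincombs k" using p_graph by (auto simp: \<gamma>_def lincombs_def)
      moreover have "p_lin n a B k \<gamma> = p_graph n a B k F"
        using p_lin_eq_sum[of "{F}" \<gamma>] by (auto simp: fun_eq_iff supp_def \<gamma>_def)
      ultimately show ?case by (blast intro: image_eqI[OF sym])
    next
      case zero
      have "p_lin n a B k (\<lambda>_. 0) = (\<lambda>_. 0)" by (simp add: p_lin_def supp_def)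
      moreover have "(\<lambda>_. 0) \<in> lincombs k" by (simp add: lincombs_def)
      ultimately show ?case by (blast intro: image_eqI[OF sym])
    next
      case (add S T)
      then obtain \<gamma>1 \<gamma>2 where "\<gamma>1 \<in> lincombs k" "S = p_lin n a B k \<gamma>1"
          "\<gamma>2 \<in> lincombs k" "T = p_lin n a B k \<gamma>2"
        by auto
      then show ?case
        using lincombs_add[of \<gamma>1 k \<gamma>2] by (blast intro: image_eqI[OF sym])
    next
      case (smult S c)
      then obtain \<gamma> where "\<gamma> \<in> lincombs k" "S = p_lin n a B k \<gamma>" by auto
      then show ?case
        using lincombs_smult[of \<gamma> k c] by (blast intro: image_eqI[OF sym])
    qed
  qed
qed

lemma p_equiv_refl: "p_equiv n a B k xs xs"
  by (simp add: p_equiv_def)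

lemma p_equiv_sym: "p_equiv n a B k xs ys \<Longrightarrow> p_equiv n a B k ys xs"
  unfolding p_equiv_def by metis

lemma p_equiv_trans: "p_equiv n a B k xs ys \<Longrightarrow> p_equiv n a B k ys zs \<Longrightarrow> p_equiv n a B k xs zs"
  unfolding p_equiv_def by metis

lemma p_span_respects_p_equiv:
  assumes "S \<in> p_span n a B k" "p_equiv n a B k xs ys"
  shows "S xs = S ys"
  using assms(1)
proof (induction rule: p_span.induct)
  case (p_graph F)
  then show ?case using assms(2) unfolding p_equiv_def by blast
qed simp_all

lemma p_class_eq: "p_equiv n a B k xs ys \<Longrightarrow> p_class n a B k xs = p_class n a B k ys"
  unfolding p_class_def by (metis p_equiv_sym p_equiv_trans)

lemma p_equiv_single_edge:
  assumes "p_equiv n a B k xs ys" "xs \<in> idx_lists n k" "ys \<in> idx_lists n k" "u < k" "v < k"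
  shows "B (xs ! u) (xs ! v) = B (ys ! u) (ys ! v)"
proof -
  have "(k, {#(u, v)#}) \<in> klgraphs k"
    using assms(4,5) by (auto simp: klgraphs_def is_graph_def)
  then have "p_graph n a B k (k, {#(u, v)#}) xs = p_graph n a B k (k, {#(u, v)#}) ys"
    using assms(1) unfolding p_equiv_def by blast
  then show ?thesis
    using assms(2-5) by (simp add: p_graph_single_edge)
qed

text \<open>Interpolation: the indicator is a product of affine functions of tensors \<open>p_graph F\<close>,
  one for each inequivalent index list, normalised to vanish there and to be \<open>1\<close> on the class.\<close>

lemma class_indicator_in_p_span:
  assumes xs: "xs \<in> idx_lists n k"
  shows "class_indicator n a B k xs \<in> p_span n a B k"
proof -
  define D where "D = {ys \<in> idx_lists n k. \<not> p_equiv n a B k ys xs}"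
  have "\<forall>ys\<in>D. \<exists>F\<in>klgraphs k. p_graph n a B k F ys \<noteq> p_graph n a B k F xs"
    unfolding D_def p_equiv_def by blast
  then obtain F where F: "\<And>ys. ys \<in> D \<Longrightarrow>
      F ys \<in> klgraphs k \<and> p_graph n a B k (F ys) ys \<noteq> p_graph n a B k (F ys) xs"
    by metis
  define sep where "sep = (\<lambda>ys zs.
      inverse (p_graph n a B k (F ys) xs - p_graph n a B k (F ys) ys) *
      (p_graph n a B k (F ys) zs + - p_graph n a B k (F ys) ys * unit_tensor n k zs))"
  have "sep ys \<in> p_span n a B k" if "ys \<in> D" for ys
  proof -
    have "p_graph n a B k (F ys) \<in> p_span n a B k"
      using F[OF that] by (blast intro: p_span.p_graph)
    from p_span.add[OF this p_span.smult[OF unit_tensor_in_p_span]]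
    show ?thesis
      unfolding sep_def by (rule p_span.smult)
  qed
  moreover have "class_indicator n a B k xs = (\<lambda>zs. (\<Prod>ys\<in>D. sep ys zs) * unit_tensor n k zs)"
  proof
    fix zs
    show "class_indicator n a B k xs zs = (\<Prod>ys\<in>D. sep ys zs) * unit_tensor n k zs"
    proof (cases "zs \<in> p_class n a B k xs")
      case True
      have "sep ys zs = 1" if "ys \<in> D" for ys
      proof -
        have "p_graph n a B k (F ys) zs = p_graph n a B k (F ys) xs"
          using True F[OF that] unfolding p_class_def p_equiv_def by blast
        moreover have "p_graph n a B k (F ys) xs - p_graph n a B k (F ys) ys \<noteq> 0"
          using F[OF that] by auto
        ultimately show ?thesis
          using True by (simp add: sep_def unit_tensor_def p_class_def left_inverse)
      qed
      then show ?thesis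
        using True by (simp add: class_indicator_def unit_tensor_def p_class_def)
    next
      case False
      then have "zs \<notin> idx_lists n k \<or> zs \<in> D \<and> sep zs zs = 0"
        by (auto simp: p_class_def D_def sep_def unit_tensor_def)
      then show ?thesis
        using False by (auto simp: class_indicator_def unit_tensor_def D_def intro!: prod_zero)
    qed
  qed
  ultimately show ?thesis
    using p_span_prod[of D sep] by (simp add: D_def)
qed

lemma p_span_unlabel:
  assumes "S \<in> p_span n a B (m + r)" "p_equiv n a B m xs ys" "length xs = m" "length ys = m"
  shows "(\<Sum>ws\<in>idx_lists n r. prod_list (map a ws) * S (xs @ ws)) =
         (\<Sum>ws\<in>idx_lists n r. prod_list (map a ws) * S (ys @ ws))"
  using assms(1)
proof (induction rule: p_span.induct)
  case (p_graph F)
  then have "m + r \<le> fst F" "F \<in> klgraphs m" by (auto simp: klgraphs_def)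
  moreover from this(2) have "p_graph n a B m F xs = p_graph n a B m F ys"
    using assms(2) unfolding p_equiv_def by blast
  ultimately show ?case
    using p_graph_unlabel[of m r F xs] p_graph_unlabel[of m r F ys] assms(3,4) by simp
next
  case (add S T)
  then show ?case by (simp add: distrib_left sum.distrib)
next
  case (smult S c)
  then show ?case by (simp add: sum_distrib_left[symmetric] mult.left_commute[of _ c])
qed simp

lemma hom_prod_eq_tensor_pairing:
  assumes "\<gamma> \<in> lincombs k" "F \<in> klgraphs k"
  shows "hom_prod n a B k \<gamma> F = tensor_pairing n a k (p_lin n a B k \<gamma>) (p_graph n a B k F)"
proof -
  have "\<And>F'. F' \<in> supp \<gamma> \<Longrightarrow> F' \<in> klgraphs k"
    using assms(1) by (auto simp: lincombs_def supp_def)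
  then have "hom_prod n a B k \<gamma> F = (\<Sum>F'\<in>supp \<gamma>. \<gamma> F' *
      tensor_pairing n a k (p_graph n a B k F') (p_graph n a B k F))"
    unfolding hom_prod_def using hom_lprod assms(2) by (intro sum.cong) auto
  also have "\<dots> = tensor_pairing n a k (p_lin n a B k \<gamma>) (p_graph n a B k F)"
    unfolding tensor_pairing_def p_lin_def
    by (simp add: sum_distrib_left sum_distrib_right sum.swap[of _ "supp \<gamma>"] mult_ac)
  finally show ?thesis .
qed

lemma tensor_pairing_ideal_I:
  assumes "\<gamma> \<in> ideal_I n a B k" "T \<in> p_span n a B k"
  shows "tensor_pairing n a k (p_lin n a B k \<gamma>) T = 0"
  using assms(2)
proof (induction rule: p_span.induct)
  case (p_graph F)
  from assms(1) have "\<gamma> \<in> lincombs k" "\<forall>F\<in>klgraphs k. hom_prod n a B k \<gamma> F = 0"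
    by (simp_all add: ideal_I_def)
  with p_graph show ?case by (simp add: hom_prod_eq_tensor_pairing)
next
  case (add S T)
  then show ?case by (simp add: tensor_pairing_def distrib_left sum.distrib)
next
  case (smult S c)
  then show ?case by (simp add: tensor_pairing_def sum_distrib_left[symmetric] mult.left_commute[of _ c])
qed (simp add: tensor_pairing_def)

lemma p_span_Aut_invariant:
  assumes "S \<in> p_span n a B k" "g \<in> Aut n a B"
  shows "tensor_act g S = S"
proof -
  have "S (map (inv g) ys) = S ys" for ys
    using assms(1)
  proof (induction rule: p_span.induct)
    case (p_graph F)
    have map_inv: "map g (map (inv g) ys) = ys"
      by (simp add: Aut_apply_inv[OF assms(2)] map_idI)
    show ?case
    proof (cases "map (inv g) ys \<in> idx_lists n k")
      case True
      then show ?thesis using p_graph_map_Aut[OF assms(2) p_graph True] map_inv by simp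
    next
      case False
      then have "ys \<notin> idx_lists n k"
        using Aut_inv_less[OF assms(2)] by (fastforce simp: idx_lists_def)
      then show ?thesis using False by (simp add: p_graph_outside)
    qed
  qed auto
  then show ?thesis by (simp add: tensor_act_def fun_eq_iff)
qed

end

lemma set_distinct_idx_list:
  "ws \<in> idx_lists n n \<Longrightarrow> distinct ws \<Longrightarrow> set ws = {0..<n}"
  by (intro card_subset_eq) (auto simp: idx_lists_def distinct_card)

lemma permutes_of_distinct_idx_list:
  assumes "ws \<in> idx_lists n n" "distinct ws"
  shows "(\<lambda>i. if i < n then ws ! i else i) permutes {0..<n}"
proof (rule bij_imp_permutes)
  have "set ws = {0..<n}"
    using set_distinct_idx_list[OF assms] .
  moreover have "(\<lambda>i. ws ! i) ` {0..<n} = set ws"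
    using assms(1) by (auto simp: idx_lists_def in_set_conv_nth)
  moreover have "inj_on (\<lambda>i. ws ! i) {0..<n}"
    using assms by (auto simp: inj_on_def idx_lists_def nth_eq_iff_index_eq)
  ultimately show "bij_betw (\<lambda>i. if i < n then ws ! i else i) {0..<n} {0..<n}"
    by (auto simp: bij_betw_def inj_on_def image_def)
qed simp

context
  fixes n :: nat and a :: "nat \<Rightarrow> 'f::field_char_0" and B :: "nat \<Rightarrow> nat \<Rightarrow> 'f"
begin

lemma of_nat_card_p_class_nonzero:
  assumes "xs \<in> idx_lists n k"
  shows "(of_nat (card (p_class n a B k xs)) :: 'f) \<noteq> 0"
proof -
  have "xs \<in> p_class n a B k xs" "finite (p_class n a B k xs)"
    using assms by (simp_all add: p_class_def p_equiv_refl)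
  then show ?thesis by (auto simp: card_eq_0_iff)
qed

lemma eq_sum_class_indicator:
  assumes T: "T \<in> tensors n k"
    and respects: "\<forall>xs\<in>idx_lists n k. \<forall>ys\<in>idx_lists n k. p_equiv n a B k xs ys \<longrightarrow> T xs = T ys"
  shows "T = (\<lambda>zs. \<Sum>xs\<in>idx_lists n k.
    T xs / of_nat (card (p_class n a B k xs)) * class_indicator n a B k xs zs)"
proof
  fix zs
  define C where "C = p_class n a B k"
  show "T zs = (\<Sum>xs\<in>idx_lists n k. T xs / of_nat (card (C xs)) * class_indicator n a B k xs zs)"
  proof (cases "zs \<in> idx_lists n k")
    case False
    then show ?thesis
      using T by (simp add: tensors_def class_indicator_def p_class_def)
  next
    case True
    have "xs \<in> C zs \<longleftrightarrow> xs \<in> idx_lists n k \<and> zs \<in> C xs" for xs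
      using True p_equiv_sym by (auto simp: C_def p_class_def)
    moreover have "T xs / of_nat (card (C xs)) = T zs / of_nat (card (C zs))" if "xs \<in> C zs" for xs
    proof -
      have "xs \<in> idx_lists n k" "p_equiv n a B k xs zs"
        using that by (simp_all add: C_def p_class_def)
      then show ?thesis
        using respects True p_class_eq[of n a B k xs zs] by (simp add: C_def)
    qed
    ultimately have "(\<Sum>xs\<in>idx_lists n k. T xs / of_nat (card (C xs)) * class_indicator n a B k xs zs)
        = (\<Sum>xs\<in>C zs. T zs / of_nat (card (C zs)))"
      unfolding class_indicator_def C_def
      by (intro sum.mono_neutral_cong_right) (auto simp: p_class_def)
    also have "\<dots> = T zs"
      using of_nat_card_p_class_nonzero[OF True] by (simp add: C_def)
    finally show ?thesis by simp
  qed
qed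

lemma p_span_iff_respects_p_equiv:
  "T \<in> p_span n a B k \<longleftrightarrow> T \<in> tensors n k \<and>
    (\<forall>xs\<in>idx_lists n k. \<forall>ys\<in>idx_lists n k. p_equiv n a B k xs ys \<longrightarrow> T xs = T ys)"
proof
  assume "T \<in> p_span n a B k"
  then show "T \<in> tensors n k \<and>
      (\<forall>xs\<in>idx_lists n k. \<forall>ys\<in>idx_lists n k. p_equiv n a B k xs ys \<longrightarrow> T xs = T ys)"
    by (simp add: tensors_def p_span_outside p_span_respects_p_equiv)
next
  assume "T \<in> tensors n k \<and>
    (\<forall>xs\<in>idx_lists n k. \<forall>ys\<in>idx_lists n k. p_equiv n a B k xs ys \<longrightarrow> T xs = T ys)"
  then have "T = (\<lambda>zs. \<Sum>xs\<in>idx_lists n k.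
      T xs / of_nat (card (p_class n a B k xs)) * class_indicator n a B k xs zs)"
    using eq_sum_class_indicator by blast
  also have "\<dots> \<in> p_span n a B k"
    by (intro p_span_sum p_span.smult class_indicator_in_p_span) simp_all
  finally show "T \<in> p_span n a B k" .
qed

context
  assumes twin_free: "twin_free n B" and a_nonzero: "\<forall>i<n. a i \<noteq> 0"
begin

lemma twin_free_eqI:
  assumes "i < n" "j < n" "{0..<n} \<subseteq> C" "\<forall>c\<in>C. B i c = B j c"
  shows "i = j"
  using twin_free assms unfolding twin_free_def by (metis atLeastLessThan_iff le0 subsetD)

lemma p_equiv_snoc_unique:
  assumes s: "s \<in> idx_lists n N" "{0..<n} \<subseteq> set s" and "w < n" "h < n"
    and equiv: "p_equiv n a B (Suc N) (s @ [w]) (s @ [h])"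
  shows "w = h"
proof (rule twin_free_eqI[OF assms(3,4) s(2)], intro ballI)
  fix c assume "c \<in> set s"
  then obtain p where p: "p < N" "s ! p = c"
    using s(1) by (auto simp: in_set_conv_nth idx_lists_def)
  have "s @ [w] \<in> idx_lists n (Suc N)" "s @ [h] \<in> idx_lists n (Suc N)"
    using s(1) assms(3,4) by (auto simp: idx_lists_def)
  from p_equiv_single_edge[OF equiv this, of N p] show "B w c = B h c"
    using p s(1) by (simp add: idx_lists_def nth_append)
qed

text \<open>Unlabelling the last vertex of the indicator of the class of \<open>s @ [h]\<close> compares
  the weight \<open>a h\<close> with the weights of the extensions of \<open>t\<close> in that class.\<close>

lemma class_indicator_snoc:
  assumes s: "s \<in> idx_lists n N" "{0..<n} \<subseteq> set s" and "v < n" "w < n"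
    and equiv: "p_equiv n a B (Suc N) (s @ [v]) zs"
  shows "class_indicator n a B (Suc N) zs (s @ [w]) = (if w = v then 1 else 0)"
proof -
  have idx: "s @ [w] \<in> idx_lists n (Suc N)"
    using s(1) \<open>w < n\<close> by (auto simp: idx_lists_def)
  show ?thesis
  proof (cases "w = v")
    case True
    then show ?thesis
      using idx equiv by (simp add: class_indicator_def p_class_def)
  next
    case False
    have "\<not> p_equiv n a B (Suc N) (s @ [w]) zs"
    proof
      assume "p_equiv n a B (Suc N) (s @ [w]) zs"
      from p_equiv_trans[OF this p_equiv_sym[OF equiv]] have "w = v"
        by (rule p_equiv_snoc_unique[OF s \<open>w < n\<close> \<open>v < n\<close>])
      with False show False ..
    qed
    then show ?thesis
      using False by (simp add: class_indicator_def p_class_def)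
  qed
qed

lemma p_equiv_snoc_exists:
  assumes s: "s \<in> idx_lists n N" "{0..<n} \<subseteq> set s"
    and t: "t \<in> idx_lists n N" "{0..<n} \<subseteq> set t"
    and equiv: "p_equiv n a B N t s" and h: "h < n"
  shows "\<exists>w<n. a w = a h \<and> p_equiv n a B (Suc N) (t @ [w]) (s @ [h])"
proof -
  define f where "f = class_indicator n a B (Suc N) (s @ [h])"
  have "s @ [h] \<in> idx_lists n (Suc N)"
    using s(1) h by (auto simp: idx_lists_def)
  then have "f \<in> p_span n a B (N + 1)"
    using class_indicator_in_p_span by (simp add: f_def)
  then have "(\<Sum>w<n. a w * f (t @ [w])) = (\<Sum>w<n. a w * f (s @ [w]))"
    using p_span_unlabel[of f n a B N 1 t s] equiv idx_lists_length[OF s(1)] idx_lists_length[OF t(1)]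
    by (simp add: sum_idx_lists_1)
  also have "\<dots> = (\<Sum>w<n. if w = h then a w else 0)"
    using class_indicator_snoc[OF s h _ p_equiv_refl] by (intro sum.cong) (simp_all add: f_def)
  also have "\<dots> = a h"
    using h by simp
  finally have sum_t: "(\<Sum>w<n. a w * f (t @ [w])) = a h" .
  then have "(\<Sum>w<n. a w * f (t @ [w])) \<noteq> 0"
    using a_nonzero h by simp
  then obtain w where w: "w \<in> {..<n}" "a w * f (t @ [w]) \<noteq> 0"
    by (rule sum.not_neutral_contains_not_neutral)
  then have w_equiv: "p_equiv n a B (Suc N) (t @ [w]) (s @ [h])"
    by (simp add: f_def class_indicator_def p_class_def split: if_splits)
  have "(\<Sum>v<n. a v * f (t @ [v])) = (\<Sum>v<n. if v = w then a v else 0)"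
    using class_indicator_snoc[OF t _ _ w_equiv] w(1) by (intro sum.cong) (simp_all add: f_def)
  also have "\<dots> = a w"
    using w(1) by simp
  finally have "(\<Sum>v<n. a v * f (t @ [v])) = a w" .
  then show ?thesis
    using sum_t w(1) w_equiv by auto
qed

text \<open>In a frame \<open>p_equiv (k + n) (ys @ ws) (xs @ [0..<n])\<close> every vertex carries a label, and
  \<open>ws\<close> is the candidate automorphism mapping \<open>xs\<close> to \<open>ys\<close>.\<close>

lemma p_equiv_frame_B_distinct:
  assumes xs: "xs \<in> idx_lists n k" and ys: "ys \<in> idx_lists n k" and ws: "ws \<in> idx_lists n n"
    and frame: "p_equiv n a B (k + n) (ys @ ws) (xs @ [0..<n])"
  shows "\<forall>i<n. \<forall>j<n. B (ws ! i) (ws ! j) = B i j" and "distinct ws"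
proof -
  have len: "length xs = k" "length ys = k" "length ws = n"
    using xs ys ws by (simp_all add: idx_lists_length)
  show B_ws: "\<forall>i<n. \<forall>j<n. B (ws ! i) (ws ! j) = B i j"
  proof (intro allI impI)
    fix i j assume "i < n" "j < n"
    then show "B (ws ! i) (ws ! j) = B i j"
      using p_equiv_single_edge[OF frame idx_lists_append[OF ys ws]
          idx_lists_append[OF xs upt_in_idx_lists], of "k + i" "k + j"] len
      by (simp add: nth_append)
  qed
  show "distinct ws"
    unfolding distinct_conv_nth
  proof (intro allI impI)
    fix i j assume ij: "i < length ws" "j < length ws" "i \<noteq> j"
    show "ws ! i \<noteq> ws ! j"
    proof
      assume "ws ! i = ws ! j"
      then have "\<forall>l\<in>{0..<n}. B i l = B j l"
        using B_ws ij len by (metis atLeastLessThan_iff)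
      then show False
        using twin_free_eqI[of i j "{0..<n}"] ij len by simp
    qed
  qed
qed

lemma p_equiv_frame_eqI:
  assumes xs: "xs \<in> idx_lists n k" and ys: "ys \<in> idx_lists n k" and ws: "ws \<in> idx_lists n n"
    and frame: "p_equiv n a B (k + n) (ys @ ws) (xs @ [0..<n])"
    and "w < n" "v < n" "\<forall>l<n. B w (ws ! l) = B v (ws ! l)"
  shows "w = v"
proof (rule twin_free_eqI[OF assms(5,6)])
  show "{0..<n} \<subseteq> set ws"
    using set_distinct_idx_list[OF ws p_equiv_frame_B_distinct(2)[OF xs ys ws frame]] by simp
  show "\<forall>c\<in>set ws. B w c = B v c"
    using assms(7) idx_lists_length[OF ws] by (auto simp: in_set_conv_nth)
qed

lemma p_equiv_frame_label:
  assumes xs: "xs \<in> idx_lists n k" and ys: "ys \<in> idx_lists n k" and ws: "ws \<in> idx_lists n n"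
    and frame: "p_equiv n a B (k + n) (ys @ ws) (xs @ [0..<n])" and "j < k"
  shows "ys ! j = ws ! (xs ! j)"
proof (rule p_equiv_frame_eqI[OF xs ys ws frame])
  have len: "length xs = k" "length ys = k" "length ws = n"
    using xs ys ws by (simp_all add: idx_lists_length)
  show "ys ! j < n" "ws ! (xs ! j) < n"
    using idx_lists_nth[OF ys \<open>j < k\<close>] idx_lists_nth[OF ws idx_lists_nth[OF xs \<open>j < k\<close>]] .
  show "\<forall>l<n. B (ys ! j) (ws ! l) = B (ws ! (xs ! j)) (ws ! l)"
  proof (intro allI impI)
    fix l assume "l < n"
    then have "B (ys ! j) (ws ! l) = B (xs ! j) l"
      using p_equiv_single_edge[OF frame idx_lists_append[OF ys ws]
          idx_lists_append[OF xs upt_in_idx_lists], of j "k + l"] len \<open>j < k\<close>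
      by (simp add: nth_append)
    also have "\<dots> = B (ws ! (xs ! j)) (ws ! l)"
      using p_equiv_frame_B_distinct(1)[OF xs ys ws frame] idx_lists_nth[OF xs \<open>j < k\<close>] \<open>l < n\<close>
      by simp
    finally show "B (ys ! j) (ws ! l) = B (ws ! (xs ! j)) (ws ! l)" .
  qed
qed

lemma p_equiv_frame_weight:
  assumes xs: "xs \<in> idx_lists n k" and ys: "ys \<in> idx_lists n k" and ws: "ws \<in> idx_lists n n"
    and frame: "p_equiv n a B (k + n) (ys @ ws) (xs @ [0..<n])" and h: "h < n"
  shows "a (ws ! h) = a h"
proof -
  have len: "length xs = k" "length ys = k" "length ws = n"
    using xs ys ws by (simp_all add: idx_lists_length)
  have "{0..<n} \<subseteq> set (ys @ ws)"
    using set_distinct_idx_list[OF ws p_equiv_frame_B_distinct(2)[OF xs ys ws frame]] by simp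
  then obtain w where w: "w < n" "a w = a h"
    and extended: "p_equiv n a B (Suc (k + n)) ((ys @ ws) @ [w]) ((xs @ [0..<n]) @ [h])"
    using p_equiv_snoc_exists[OF idx_lists_append[OF xs upt_in_idx_lists] _
        idx_lists_append[OF ys ws] _ frame h]
    by auto
  have ext_idx: "(ys @ ws) @ [w] \<in> idx_lists n (Suc (k + n))"
      "(xs @ [0..<n]) @ [h] \<in> idx_lists n (Suc (k + n))"
    using xs ys ws w(1) h by (auto simp: idx_lists_def)
  have "w = ws ! h"
  proof (rule p_equiv_frame_eqI[OF xs ys ws frame w(1) idx_lists_nth[OF ws h]], intro allI impI)
    fix l assume "l < n"
    then have "B w (ws ! l) = B h l"
      using p_equiv_single_edge[OF extended ext_idx, of "k + n" "k + l"] len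
      by (simp add: nth_append)
    then show "B w (ws ! l) = B (ws ! h) (ws ! l)"
      using p_equiv_frame_B_distinct(1)[OF xs ys ws frame] h \<open>l < n\<close> by simp
  qed
  then show ?thesis using w(2) by simp
qed

lemma p_equiv_frame_imp_Aut:
  assumes xs: "xs \<in> idx_lists n k" and ys: "ys \<in> idx_lists n k" and ws: "ws \<in> idx_lists n n"
    and frame: "p_equiv n a B (k + n) (ys @ ws) (xs @ [0..<n])"
  shows "\<exists>g\<in>Aut n a B. map g xs = ys \<and> map g [0..<n] = ws"
proof -
  define g where "g = (\<lambda>i. if i < n then ws ! i else i)"
  have "g \<in> Aut n a B"
    using permutes_of_distinct_idx_list[OF ws p_equiv_frame_B_distinct(2)[OF assms]]
      p_equiv_frame_weight[OF assms] p_equiv_frame_B_distinct(1)[OF assms]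
    by (simp add: Aut_def g_def)
  moreover have "map g xs = ys"
    using p_equiv_frame_label[OF assms] idx_lists_nth[OF xs] xs ys
    by (intro nth_equalityI) (simp_all add: g_def idx_lists_length)
  moreover have "map g [0..<n] = ws"
    using idx_lists_length[OF ws] by (intro nth_equalityI) (simp_all add: g_def)
  ultimately show ?thesis by blast
qed

lemma p_equiv_imp_Aut_orbit:
  assumes xs: "xs \<in> idx_lists n k" and ys: "ys \<in> idx_lists n k"
    and equiv: "p_equiv n a B k xs ys"
  shows "\<exists>g\<in>Aut n a B. map g xs = ys"
proof -
  define z where "z = xs @ [0..<n]"
  define e where "e = class_indicator n a B (k + n) z"
  define W where "W = {ws \<in> idx_lists n n. p_equiv n a B (k + n) (xs @ ws) z}"
  define c where "c = prod_list (map a [0..<n])"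
  have z: "z \<in> idx_lists n (k + n)"
    using idx_lists_append[OF xs upt_in_idx_lists] by (simp add: z_def)
  have e_W: "e (xs @ ws) = (if ws \<in> W then 1 else 0)" if "ws \<in> idx_lists n n" for ws
    using idx_lists_append[OF xs that] that by (simp add: e_def W_def class_indicator_def p_class_def)
  have c_W: "prod_list (map a ws) = c" if "ws \<in> W" for ws
  proof -
    have "ws \<in> idx_lists n n" "p_equiv n a B (k + n) (xs @ ws) (xs @ [0..<n])"
      using that by (simp_all add: W_def z_def)
    then obtain g where g: "g \<in> Aut n a B" "map g [0..<n] = ws"
      using p_equiv_frame_imp_Aut[OF xs xs] by blast
    then show ?thesis
      using prod_list_map_Aut[OF g(1) upt_in_idx_lists] by (simp add: c_def)
  qed
  have "e \<in> p_span n a B (k + n)"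
    unfolding e_def by (rule class_indicator_in_p_span[OF z])
  then have "(\<Sum>ws\<in>idx_lists n n. prod_list (map a ws) * e (ys @ ws)) =
      (\<Sum>ws\<in>idx_lists n n. prod_list (map a ws) * e (xs @ ws))"
    by (rule p_span_unlabel[OF _ p_equiv_sym[OF equiv] idx_lists_length[OF ys] idx_lists_length[OF xs]])
  also have "\<dots> = (\<Sum>ws\<in>W. c)"
    using e_W c_W by (intro sum.mono_neutral_cong_right) (auto simp: W_def)
  also have "\<dots> = of_nat (card W) * c" by simp
  also have "\<dots> \<noteq> 0"
  proof -
    have "[0..<n] \<in> W" "finite W"
      using upt_in_idx_lists by (simp_all add: W_def z_def p_equiv_refl)
    then have "(of_nat (card W) :: 'f) \<noteq> 0" by (auto simp: card_eq_0_iff)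
    moreover have "c \<noteq> 0"
      using prod_list_map_nonzero[OF a_nonzero upt_in_idx_lists] by (simp add: c_def)
    ultimately show ?thesis by simp
  qed
  finally obtain ws where "ws \<in> idx_lists n n" "prod_list (map a ws) * e (ys @ ws) \<noteq> 0"
    by (rule sum.not_neutral_contains_not_neutral)
  then have "p_equiv n a B (k + n) (ys @ ws) (xs @ [0..<n])"
    by (simp add: e_def z_def class_indicator_def p_class_def split: if_splits)
  then show ?thesis
    using p_equiv_frame_imp_Aut[OF xs ys \<open>ws \<in> idx_lists n n\<close>] by blast
qed

lemma tensor_pairing_class_indicator:
  assumes S: "S \<in> p_span n a B k" and ys: "ys \<in> idx_lists n k"
  shows "tensor_pairing n a k S (class_indicator n a B k ys) =
    of_nat (card (p_class n a B k ys)) * (prod_list (map a ys) * S ys)"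
proof -
  have "prod_list (map a xs) * S xs = prod_list (map a ys) * S ys" if "xs \<in> p_class n a B k ys" for xs
  proof -
    have xs: "xs \<in> idx_lists n k" and equiv: "p_equiv n a B k xs ys"
      using that by (simp_all add: p_class_def)
    obtain g where g: "g \<in> Aut n a B" "map g xs = ys"
      using p_equiv_imp_Aut_orbit[OF xs ys equiv] by blast
    then show ?thesis
      using prod_list_map_Aut[OF g(1) xs] p_span_respects_p_equiv[OF S equiv] by simp
  qed
  then have "tensor_pairing n a k S (class_indicator n a B k ys) =
      (\<Sum>xs\<in>p_class n a B k ys. prod_list (map a ys) * S ys)"
    unfolding tensor_pairing_def class_indicator_def
    by (intro sum.mono_neutral_cong_right) (auto simp: p_class_def)
  then show ?thesis by simp
qed

lemma p_lin_kernel_eq_ideal_I: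
  "{\<gamma> \<in> lincombs k. p_lin n a B k \<gamma> = (\<lambda>_. 0)} = ideal_I n a B k"
proof
  show "{\<gamma> \<in> lincombs k. p_lin n a B k \<gamma> = (\<lambda>_. 0)} \<subseteq> ideal_I n a B k"
    by (auto simp: ideal_I_def hom_prod_eq_tensor_pairing tensor_pairing_def)
next
  show "ideal_I n a B k \<subseteq> {\<gamma> \<in> lincombs k. p_lin n a B k \<gamma> = (\<lambda>_. 0)}"
  proof (intro subsetI CollectI conjI)
    fix \<gamma> assume \<gamma>: "\<gamma> \<in> ideal_I n a B k"
    then show "\<gamma> \<in> lincombs k" by (simp add: ideal_I_def)
    then have S: "p_lin n a B k \<gamma> \<in> p_span n a B k"
      using p_lin_image_eq_p_span by blast
    have "p_lin n a B k \<gamma> ys = 0" for ys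
    proof (cases "ys \<in> idx_lists n k")
      case True
      then have "of_nat (card (p_class n a B k ys)) * (prod_list (map a ys) * p_lin n a B k \<gamma> ys) = 0"
        using tensor_pairing_ideal_I[OF \<gamma> class_indicator_in_p_span[OF True]]
          tensor_pairing_class_indicator[OF S True]
        by simp
      then show ?thesis
        using of_nat_card_p_class_nonzero[OF True] prod_list_map_nonzero[OF a_nonzero True] by simp
    qed (use S p_span_outside in blast)
    then show "p_lin n a B k \<gamma> = (\<lambda>_. 0)" by auto
  qed
qed

lemma p_span_eq_invariant_tensors: "p_span n a B k = invariant_tensors n a B k"
proof
  show "p_span n a B k \<subseteq> invariant_tensors n a B k"
    by (auto simp: invariant_tensors_def tensors_def p_span_outside p_span_Aut_invariant)
next
  show "invariant_tensors n a B k \<subseteq> p_span n a B k"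
  proof
    fix T assume T: "T \<in> invariant_tensors n a B k"
    have "T xs = T ys"
      if xs: "xs \<in> idx_lists n k" and ys: "ys \<in> idx_lists n k" and "p_equiv n a B k xs ys" for xs ys
    proof -
      obtain g where g: "g \<in> Aut n a B" "map g xs = ys"
        using p_equiv_imp_Aut_orbit[OF xs ys \<open>p_equiv n a B k xs ys\<close>] by blast
      then have "T (map (inv g) ys) = T ys"
        using T by (simp add: invariant_tensors_def tensor_act_def fun_eq_iff)
      moreover have "map (inv g) ys = xs"
        unfolding g(2)[symmetric] by (simp add: map_idI Aut_inv_apply[OF g(1)])
      ultimately show ?thesis by simp
    qed
    then show "T \<in> p_span n a B k"
      using T by (simp add: p_span_iff_respects_p_equiv invariant_tensors_def)
  qed
qed

end

end

theorem theorem2p1: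
  fixes n k :: nat and a :: "nat \<Rightarrow> 'f::field_char_0" and B :: "nat \<Rightarrow> nat \<Rightarrow> 'f"
  assumes "n \<ge> 1"
    and "\<forall>i<n. a i \<noteq> 0"
    and "\<forall>i<n. \<forall>j<n. B i j = B j i"
    and "twin_free n B"
  shows "{\<gamma> \<in> lincombs k. p_lin n a B k \<gamma> = (\<lambda>_. 0)} = ideal_I n a B k
       \<and> p_lin n a B k ` lincombs k = invariant_tensors n a B k"
  using p_lin_kernel_eq_ideal_I[OF assms(4,2)] p_span_eq_invariant_tensors[OF assms(4,2)]
    p_lin_image_eq_p_span[of n a B k]
  by simp

end
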